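(* Let $\mathbb{C}$ be a regular category, $n$ a positive integer, and for each $i\in\{1,\dots,n\}$ let $\alpha_i':Q_i\to A$ and $\beta_i':Q_i\to B$ be regular epimorphisms and $a_i:A\to C_i$, $b_i:B\to C_i$ morphisms with $b_i\beta_i'=a_i\alpha_i'$. Then there exist an object $Q$, a regular epimorphism $\alpha:Q\to A$ and regular epimorphisms $\beta_i:Q\to B$ ($i=1,\dots,n$) such that $b_i\beta_i=a_i\alpha$ for every $i\in\{1,\dots,n\}$.
   Context: A category is regular if it has finite limits and coequalizers of kernel pairs and regular epimorphisms are stable under pullback. *)

theory Defs
  imports Main
begin

text \<open>A (locally small, set-based) category: objects of type 'o, arrows of type 'a.
  comp g f denotes the composite "g after f" (defined when cod f = dom g).\<close>

record ('o, 'a) category =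
  Ob :: "'o set"
  Ar :: "'a set"
  dom :: "'a \<Rightarrow> 'o"
  cod :: "'a \<Rightarrow> 'o"
  ident :: "'o \<Rightarrow> 'a"
  comp :: "'a \<Rightarrow> 'a \<Rightarrow> 'a"

definition hom :: "('o, 'a) category \<Rightarrow> 'o \<Rightarrow> 'o \<Rightarrow> 'a set" where
  "hom C x y = {f \<in> Ar C. dom C f = x \<and> cod C f = y}"

definition is_category :: "('o, 'a) category \<Rightarrow> bool" where
  "is_category C \<longleftrightarrow>
     (\<forall>f \<in> Ar C. dom C f \<in> Ob C \<and> cod C f \<in> Ob C) \<and>
     (\<forall>x \<in> Ob C. ident C x \<in> hom C x x) \<and>
     (\<forall>x \<in> Ob C. \<forall>y \<in> Ob C. \<forall>z \<in> Ob C. \<forall>f \<in> hom C x y. \<forall>g \<in> hom C y z.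
        comp C g f \<in> hom C x z) \<and>
     (\<forall>f \<in> Ar C. comp C (ident C (cod C f)) f = f \<and> comp C f (ident C (dom C f)) = f) \<and>
     (\<forall>f \<in> Ar C. \<forall>g \<in> Ar C. \<forall>h \<in> Ar C. cod C f = dom C g \<longrightarrow> cod C g = dom C h \<longrightarrow>
        comp C h (comp C g f) = comp C (comp C h g) f)"

text \<open>A finite diagram is given by a finite graph (vertex set V, edge set E of naturals,
  source s, target t) and an assignment of objects D to vertices and arrows F to edges.
  (Limits over a finite category J are the same as limits over its underlying finite graph.)\<close>

definition is_finite_diagram :: "('o, 'a) category \<Rightarrow> nat set \<Rightarrow> nat set \<Rightarrow>
    (nat \<Rightarrow> nat) \<Rightarrow> (nat \<Rightarrow> nat) \<Rightarrow> (nat \<Rightarrow> 'o) \<Rightarrow> (nat \<Rightarrow> 'a) \<Rightarrow> bool" where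
  "is_finite_diagram C V E s t D F \<longleftrightarrow> finite V \<and> finite E \<and>
     (\<forall>e \<in> E. s e \<in> V \<and> t e \<in> V) \<and> (\<forall>v \<in> V. D v \<in> Ob C) \<and>
     (\<forall>e \<in> E. F e \<in> hom C (D (s e)) (D (t e)))"

definition is_cone :: "('o, 'a) category \<Rightarrow> nat set \<Rightarrow> nat set \<Rightarrow>
    (nat \<Rightarrow> nat) \<Rightarrow> (nat \<Rightarrow> nat) \<Rightarrow> (nat \<Rightarrow> 'o) \<Rightarrow> (nat \<Rightarrow> 'a) \<Rightarrow> 'o \<Rightarrow> (nat \<Rightarrow> 'a) \<Rightarrow> bool" where
  "is_cone C V E s t D F L lam \<longleftrightarrow> L \<in> Ob C \<and> (\<forall>v \<in> V. lam v \<in> hom C L (D v)) \<and>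
     (\<forall>e \<in> E. comp C (F e) (lam (s e)) = lam (t e))"

definition is_limit :: "('o, 'a) category \<Rightarrow> nat set \<Rightarrow> nat set \<Rightarrow>
    (nat \<Rightarrow> nat) \<Rightarrow> (nat \<Rightarrow> nat) \<Rightarrow> (nat \<Rightarrow> 'o) \<Rightarrow> (nat \<Rightarrow> 'a) \<Rightarrow> 'o \<Rightarrow> (nat \<Rightarrow> 'a) \<Rightarrow> bool" where
  "is_limit C V E s t D F L lam \<longleftrightarrow> is_cone C V E s t D F L lam \<and>
     (\<forall>L' lam'. is_cone C V E s t D F L' lam' \<longrightarrow>
        (\<exists>!u. u \<in> hom C L' L \<and> (\<forall>v \<in> V. comp C (lam v) u = lam' v)))"

definition has_finite_limits :: "('o, 'a) category \<Rightarrow> bool" where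
  "has_finite_limits C \<longleftrightarrow> (\<forall>V E s t D F. is_finite_diagram C V E s t D F \<longrightarrow>
     (\<exists>L lam. is_limit C V E s t D F L lam))"

definition is_pullback :: "('o, 'a) category \<Rightarrow> 'a \<Rightarrow> 'a \<Rightarrow> 'a \<Rightarrow> 'a \<Rightarrow> bool" where
  "is_pullback C f g p q \<longleftrightarrow>
     f \<in> Ar C \<and> g \<in> Ar C \<and> p \<in> Ar C \<and> q \<in> Ar C \<and>
     cod C f = cod C g \<and> dom C p = dom C q \<and> cod C p = dom C f \<and> cod C q = dom C g \<and>
     comp C f p = comp C g q \<and>
     (\<forall>W \<in> Ob C. \<forall>x \<in> hom C W (dom C f). \<forall>y \<in> hom C W (dom C g).
        comp C f x = comp C g y \<longrightarrow>
        (\<exists>!u. u \<in> hom C W (dom C p) \<and> comp C p u = x \<and> comp C q u = y))"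

definition is_kernel_pair :: "('o, 'a) category \<Rightarrow> 'a \<Rightarrow> 'a \<Rightarrow> 'a \<Rightarrow> bool" where
  "is_kernel_pair C f p q \<longleftrightarrow> is_pullback C f f p q"

definition is_coequalizer :: "('o, 'a) category \<Rightarrow> 'a \<Rightarrow> 'a \<Rightarrow> 'a \<Rightarrow> bool" where
  "is_coequalizer C u v e \<longleftrightarrow>
     u \<in> Ar C \<and> v \<in> Ar C \<and> e \<in> Ar C \<and>
     dom C u = dom C v \<and> cod C u = cod C v \<and> dom C e = cod C u \<and>
     comp C e u = comp C e v \<and>
     (\<forall>Z \<in> Ob C. \<forall>h \<in> hom C (cod C u) Z. comp C h u = comp C h v \<longrightarrow>
        (\<exists>!k. k \<in> hom C (cod C e) Z \<and> comp C k e = h))"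

definition regular_epi :: "('o, 'a) category \<Rightarrow> 'a \<Rightarrow> bool" where
  "regular_epi C e \<longleftrightarrow> (\<exists>u v. is_coequalizer C u v e)"

definition has_coequalizers_of_kernel_pairs :: "('o, 'a) category \<Rightarrow> bool" where
  "has_coequalizers_of_kernel_pairs C \<longleftrightarrow>
     (\<forall>f p q. is_kernel_pair C f p q \<longrightarrow> (\<exists>e. is_coequalizer C p q e))"

definition regular_epis_pullback_stable :: "('o, 'a) category \<Rightarrow> bool" where
  "regular_epis_pullback_stable C \<longleftrightarrow>
     (\<forall>f g p q. is_pullback C f g p q \<longrightarrow> regular_epi C f \<longrightarrow> regular_epi C q)"

definition regular_category :: "('o, 'a) category \<Rightarrow> bool" where
  "regular_category C \<longleftrightarrow> is_category C \<and> has_finite_limits C \<and>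
     has_coequalizers_of_kernel_pairs C \<and> regular_epis_pullback_stable C"

end

(*
  Pulling back regular epimorphisms along each other, one index at a time, produces
  a single regular epimorphism r : Q -> A together with regular epimorphisms
  s_i : Q -> Q'_i with alpha'_i s_i = r; then beta_i := beta'_i s_i works, because
  b_i beta'_i s_i = a_i alpha'_i s_i = a_i r.  The substantial point is that regular
  epimorphisms compose in a regular category.  For f = g h with (p, q) the kernel pair
  of f, a map k with k p = k q coequalizes the pair presenting h, since that pair
  factors through (p, q); so k = k' h.  The pair (u, v) presenting g lifts along h
  up to an epimorphic cover e (pullback stability), i.e. h x = u e and h y = v e;
  then f x = f y, hence k x = k y, hence k' u e = k' v e, and k' factors through g.
*)
theory Submission
  imports Defs
begin

lemma mem_hom_iff: "f \<in> hom C x y \<longleftrightarrow> f \<in> Ar C \<and> dom C f = x \<and> cod C f = y"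
  by (simp add: hom_def)

definition epi :: "('o, 'a) category \<Rightarrow> 'a \<Rightarrow> bool" where
  "epi C e \<longleftrightarrow> e \<in> Ar C \<and>
     (\<forall>h k. h \<in> Ar C \<longrightarrow> k \<in> Ar C \<longrightarrow> dom C h = cod C e \<longrightarrow> dom C k = cod C e \<longrightarrow>
        comp C h e = comp C k e \<longrightarrow> h = k)"

lemma epiD:
  assumes "epi C e" "h \<in> Ar C" "k \<in> Ar C" "dom C h = cod C e" "dom C k = cod C e"
    and "comp C h e = comp C k e"
  shows "h = k"
  using assms unfolding epi_def by blast

locale regular_cat =
  fixes C :: "('o, 'a) category"
  assumes regular: "regular_category C"
begin

lemma category: "is_category C"
  using regular unfolding regular_category_def by simp

lemma dom_in_Ob [simp]: "f \<in> Ar C \<Longrightarrow> dom C f \<in> Ob C"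
  and cod_in_Ob [simp]: "f \<in> Ar C \<Longrightarrow> cod C f \<in> Ob C"
  using category unfolding is_category_def by blast+

lemma comp_in_hom:
  assumes "f \<in> hom C x y" and "g \<in> hom C y z"
  shows "comp C g f \<in> hom C x z"
proof -
  have "x \<in> Ob C" "y \<in> Ob C" "z \<in> Ob C"
    using assms unfolding mem_hom_iff by (metis dom_in_Ob cod_in_Ob)+
  then show ?thesis
    using assms category unfolding is_category_def by blast
qed

lemma comp_Ar [simp]: "f \<in> Ar C \<Longrightarrow> g \<in> Ar C \<Longrightarrow> cod C f = dom C g \<Longrightarrow> comp C g f \<in> Ar C"
  and dom_comp [simp]: "f \<in> Ar C \<Longrightarrow> g \<in> Ar C \<Longrightarrow> cod C f = dom C g \<Longrightarrow> dom C (comp C g f) = dom C f"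
  and cod_comp [simp]: "f \<in> Ar C \<Longrightarrow> g \<in> Ar C \<Longrightarrow> cod C f = dom C g \<Longrightarrow> cod C (comp C g f) = cod C g"
  using comp_in_hom[of f "dom C f" "cod C f" g "cod C g"] by (simp_all add: mem_hom_iff)

lemma comp_assoc [simp]:
  "f \<in> Ar C \<Longrightarrow> g \<in> Ar C \<Longrightarrow> h \<in> Ar C \<Longrightarrow> cod C f = dom C g \<Longrightarrow> cod C g = dom C h \<Longrightarrow>
   comp C (comp C h g) f = comp C h (comp C g f)"
  using category unfolding is_category_def by metis

lemma ident_in_hom: "x \<in> Ob C \<Longrightarrow> ident C x \<in> hom C x x"
  using category unfolding is_category_def by blast

lemma comp_ident_right [simp]: "f \<in> Ar C \<Longrightarrow> comp C f (ident C (dom C f)) = f"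
  using category unfolding is_category_def by blast

lemma pullback_exists:
  assumes f: "f \<in> Ar C" and g: "g \<in> Ar C" and fg: "cod C f = cod C g"
  shows "\<exists>p q. is_pullback C f g p q"
proof -
  define s :: "nat \<Rightarrow> nat" where "s = (\<lambda>e. if e = 0 then 0 else 1)"
  define t :: "nat \<Rightarrow> nat" where "t = (\<lambda>e. 2)"
  define D where "D = (\<lambda>v::nat. if v = 0 then dom C f else if v = 1 then dom C g else cod C f)"
  define F where "F = (\<lambda>e::nat. if e = 0 then f else g)"
  have cone_iff: "is_cone C {0,1,2} {0,1} s t D F W lam \<longleftrightarrow>
      W \<in> Ob C \<and> lam 0 \<in> hom C W (dom C f) \<and> lam 1 \<in> hom C W (dom C g) \<and>
      lam 2 \<in> hom C W (cod C f) \<and> comp C f (lam 0) = lam 2 \<and> comp C g (lam 1) = lam 2" for W lam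
    by (auto simp: is_cone_def D_def F_def s_def t_def)
  have "is_finite_diagram C {0,1,2} {0,1} s t D F"
    using f g fg by (auto simp: is_finite_diagram_def s_def t_def D_def F_def mem_hom_iff)
  then obtain L lam where lim: "is_limit C {0,1,2} {0,1} s t D F L lam"
    using regular unfolding regular_category_def has_finite_limits_def by blast
  then have cone: "L \<in> Ob C" "lam 0 \<in> hom C L (dom C f)" "lam 1 \<in> hom C L (dom C g)"
      "comp C f (lam 0) = lam 2" "comp C g (lam 1) = lam 2"
    using cone_iff unfolding is_limit_def by blast+
  have "is_pullback C f g (lam 0) (lam 1)"
    unfolding is_pullback_def
  proof (intro conjI ballI impI)
    fix W x y
    assume W: "W \<in> Ob C" and x: "x \<in> hom C W (dom C f)" and y: "y \<in> hom C W (dom C g)"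
      and xy: "comp C f x = comp C g y"
    define lam' where "lam' = (\<lambda>v::nat. if v = 0 then x else if v = 1 then y else comp C f x)"
    have "is_cone C {0,1,2} {0,1} s t D F W lam'"
      unfolding cone_iff using W x y xy f g fg by (auto simp: lam'_def mem_hom_iff)
    then have ex1: "\<exists>!u. u \<in> hom C W L \<and> (\<forall>v \<in> {0,1,2}. comp C (lam v) u = lam' v)"
      using lim unfolding is_limit_def by blast
    have "(\<forall>v \<in> {0,1,2}. comp C (lam v) u = lam' v) \<longleftrightarrow> comp C (lam 0) u = x \<and> comp C (lam 1) u = y"
      if "u \<in> hom C W L" for u
      using that cone f by (auto simp: lam'_def mem_hom_iff simp flip: cone(4))
    then show "\<exists>!u. u \<in> hom C W (dom C (lam 0)) \<and> comp C (lam 0) u = x \<and> comp C (lam 1) u = y"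
      using ex1 cone(2) by (simp add: mem_hom_iff) metis
  qed (use cone f g fg in \<open>auto simp: mem_hom_iff\<close>)
  then show ?thesis by blast
qed

lemma pullbackD:
  assumes "is_pullback C f g p q"
  shows "f \<in> Ar C" "g \<in> Ar C" "p \<in> Ar C" "q \<in> Ar C" "cod C f = cod C g"
    "dom C q = dom C p" "cod C p = dom C f" "cod C q = dom C g" "comp C f p = comp C g q"
  using assms unfolding is_pullback_def by simp_all

lemma pullback_universal:
  assumes "is_pullback C f g p q"
  shows "\<forall>W \<in> Ob C. \<forall>x \<in> hom C W (dom C f). \<forall>y \<in> hom C W (dom C g).
           comp C f x = comp C g y \<longrightarrow>
           (\<exists>!u. u \<in> hom C W (dom C p) \<and> comp C p u = x \<and> comp C q u = y)"
  using assms unfolding is_pullback_def by blast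

lemma pullback_lift:
  assumes pb: "is_pullback C f g p q"
    and "x \<in> Ar C" "y \<in> Ar C" "dom C y = dom C x" "cod C x = dom C f" "cod C y = dom C g"
    and "comp C f x = comp C g y"
  obtains w where "w \<in> Ar C" "dom C w = dom C x" "cod C w = dom C p"
    "comp C p w = x" "comp C q w = y"
proof -
  have "\<exists>!w. w \<in> hom C (dom C x) (dom C p) \<and> comp C p w = x \<and> comp C q w = y"
    using pullback_universal[OF pb, rule_format, of "dom C x" x y] assms(2-)
    by (simp add: mem_hom_iff)
  then show ?thesis
    using that unfolding mem_hom_iff by blast
qed

lemma pullback_sym:
  assumes pb: "is_pullback C f g p q"
  shows "is_pullback C g f q p"
  unfolding is_pullback_def
proof (intro conjI ballI impI)
  note parts = pullbackD[OF pb]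
  fix W x y
  assume "W \<in> Ob C" "x \<in> hom C W (dom C g)" "y \<in> hom C W (dom C f)" "comp C g x = comp C f y"
  then have "\<exists>!u. u \<in> hom C W (dom C p) \<and> comp C p u = y \<and> comp C q u = x"
    using pullback_universal[OF pb] by simp
  then show "\<exists>!u. u \<in> hom C W (dom C q) \<and> comp C q u = x \<and> comp C p u = y"
    using parts(6) by (simp add: conj_commute)
qed (use pullbackD[OF pb] in simp_all)

lemma regular_epi_pullback: "is_pullback C f g p q \<Longrightarrow> regular_epi C f \<Longrightarrow> regular_epi C q"
  using regular unfolding regular_category_def regular_epis_pullback_stable_def by blast

lemma coequalizerD:
  assumes "is_coequalizer C u v e"
  shows "u \<in> Ar C" "v \<in> Ar C" "e \<in> Ar C" "dom C v = dom C u" "cod C v = cod C u"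
    "dom C e = cod C u" "comp C e u = comp C e v"
  using assms unfolding is_coequalizer_def by simp_all

lemma coequalizer_universal:
  assumes co: "is_coequalizer C u v e"
    and "h \<in> Ar C" "dom C h = cod C u" "comp C h u = comp C h v"
  shows "\<exists>!k. k \<in> hom C (cod C e) (cod C h) \<and> comp C k e = h"
proof -
  have "\<forall>Z \<in> Ob C. \<forall>h \<in> hom C (cod C u) Z. comp C h u = comp C h v \<longrightarrow>
      (\<exists>!k. k \<in> hom C (cod C e) Z \<and> comp C k e = h)"
    using co unfolding is_coequalizer_def by blast
  then show ?thesis
    using assms(2-) by (simp add: mem_hom_iff)
qed

lemma coequalizer_factor:
  assumes "is_coequalizer C u v e"
    and "h \<in> Ar C" "dom C h = cod C u" "comp C h u = comp C h v"
  obtains k where "k \<in> Ar C" "dom C k = cod C e" "cod C k = cod C h" "comp C k e = h"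
  using coequalizer_universal[OF assms] that unfolding mem_hom_iff by blast

lemma regular_epi_Ar: "regular_epi C e \<Longrightarrow> e \<in> Ar C"
  unfolding regular_epi_def is_coequalizer_def by blast

lemma regular_epi_imp_epi:
  assumes "regular_epi C e"
  shows "epi C e"
  unfolding epi_def
proof (intro conjI allI impI)
  obtain u v where co: "is_coequalizer C u v e"
    using assms unfolding regular_epi_def by blast
  note uv = coequalizerD[OF co]
  show "e \<in> Ar C" by (fact uv(3))
  fix h k
  assume h: "h \<in> Ar C" "dom C h = cod C e" and k: "k \<in> Ar C" "dom C k = cod C e"
    and hk: "comp C h e = comp C k e"
  have "cod C k = cod C h"
    using arg_cong[OF hk, of "cod C"] h k uv by simp
  moreover have "comp C (comp C h e) u = comp C (comp C h e) v"
    using h uv by simp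
  then have "\<exists>!l. l \<in> hom C (cod C e) (cod C h) \<and> comp C l e = comp C h e"
    using coequalizer_universal[OF co, of "comp C h e"] h uv by simp
  ultimately show "h = k"
    using h k hk unfolding mem_hom_iff by metis
qed

lemma epi_comp:
  assumes h: "epi C h" and g: "epi C g" and hg: "cod C h = dom C g"
  shows "epi C (comp C g h)"
  unfolding epi_def
proof (intro conjI allI impI)
  have hA: "h \<in> Ar C" and gA: "g \<in> Ar C"
    using h g unfolding epi_def by blast+
  then show "comp C g h \<in> Ar C" using hg by simp
  fix k l
  assume k: "k \<in> Ar C" "dom C k = cod C (comp C g h)" and l: "l \<in> Ar C" "dom C l = cod C (comp C g h)"
    and kl: "comp C k (comp C g h) = comp C l (comp C g h)"
  have "comp C (comp C k g) h = comp C (comp C l g) h"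
    using kl k l hA gA hg by simp
  then have "comp C k g = comp C l g"
    by (rule epiD[OF h, rotated -1]) (use k l hA gA hg in simp_all)
  then show "k = l"
    by (rule epiD[OF g, rotated -1]) (use k l hA gA hg in simp_all)
qed

lemma regular_epi_ident:
  assumes x: "x \<in> Ob C"
  shows "regular_epi C (ident C x)"
proof -
  have i: "ident C x \<in> Ar C" "dom C (ident C x) = x" "cod C (ident C x) = x"
    using ident_in_hom[OF x] by (simp_all add: mem_hom_iff)
  have "is_coequalizer C (ident C x) (ident C x) (ident C x)"
    unfolding is_coequalizer_def
  proof (intro conjI ballI impI)
    fix Z h
    assume "h \<in> hom C (cod C (ident C x)) Z"
    then have h: "h \<in> Ar C" "dom C h = x" "cod C h = Z"
      using i by (simp_all add: mem_hom_iff)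
    show "\<exists>!k. k \<in> hom C (cod C (ident C x)) Z \<and> comp C k (ident C x) = h"
      using h i comp_ident_right unfolding mem_hom_iff by metis
  qed (use i in simp_all)
  then show ?thesis
    unfolding regular_epi_def by blast
qed

text \<open>The cover is only claimed to be epi: it is a composite of two pulled-back regular
  epis, and closure of regular epis under composition is what this lemma serves to prove.\<close>

lemma regular_epi_cover_pair:
  assumes h: "regular_epi C h"
    and u: "u \<in> Ar C" "cod C u = cod C h" and v: "v \<in> Ar C" "cod C v = cod C h"
    and uv: "dom C v = dom C u"
  obtains e x y where "epi C e" "cod C e = dom C u"
    "x \<in> Ar C" "dom C x = dom C e" "cod C x = dom C h"
    "y \<in> Ar C" "dom C y = dom C e" "cod C y = dom C h"
    "comp C h x = comp C u e" "comp C h y = comp C v e"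
proof -
  have hA: "h \<in> Ar C" by (rule regular_epi_Ar[OF h])
  obtain x1 e1 where pb1: "is_pullback C h u x1 e1"
    using pullback_exists[OF hA u(1)] u(2) by auto
  have x1: "x1 \<in> Ar C" "cod C x1 = dom C h" "comp C h x1 = comp C u e1"
    and e1: "e1 \<in> Ar C" "dom C e1 = dom C x1" "cod C e1 = dom C u"
    using pullbackD[OF pb1] by simp_all
  have ve1: "comp C v e1 \<in> Ar C" "cod C (comp C v e1) = cod C h"
    using e1 v uv by simp_all
  obtain y e2 where pb2: "is_pullback C h (comp C v e1) y e2"
    using pullback_exists[OF hA ve1(1)] ve1(2) by auto
  have y: "y \<in> Ar C" "cod C y = dom C h" "comp C h y = comp C (comp C v e1) e2"
    and e2: "e2 \<in> Ar C" "dom C e2 = dom C y" "cod C e2 = dom C e1"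
    using pullbackD[OF pb2] e1 v uv by simp_all
  have epi: "epi C e1" "epi C e2"
    using regular_epi_pullback[OF pb1 h] regular_epi_pullback[OF pb2 h]
    by (simp_all add: regular_epi_imp_epi)
  show ?thesis
  proof (rule that[of "comp C e1 e2" "comp C x1 e2" y])
    show "epi C (comp C e1 e2)"
      using epi_comp[OF epi(2) epi(1)] e2(3) .
    have "comp C h (comp C x1 e2) = comp C (comp C h x1) e2"
      using x1(1,2) e1(2) e2 hA by simp
    then show "comp C h (comp C x1 e2) = comp C u (comp C e1 e2)"
      using x1(3) e1 e2 u by simp
    show "comp C h y = comp C v (comp C e1 e2)"
      using y(3) e1 e2 v uv by simp
  qed (use x1 e1 e2 y in simp_all)
qed

lemma kernel_pair_coequalizer_eq:
  assumes kp: "is_kernel_pair C f p q"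
    and k: "k \<in> Ar C" "dom C k = cod C p" "comp C k p = comp C k q"
    and xy: "x \<in> Ar C" "y \<in> Ar C" "dom C y = dom C x" "cod C x = dom C f" "cod C y = dom C f"
    and fxy: "comp C f x = comp C f y"
  shows "comp C k x = comp C k y"
proof -
  have pb: "is_pullback C f f p q"
    using kp unfolding is_kernel_pair_def .
  note pq = pullbackD[OF pb]
  obtain w where w: "w \<in> Ar C" "dom C w = dom C x" "cod C w = dom C p"
    "comp C p w = x" "comp C q w = y"
    using pullback_lift[OF pb xy fxy] .
  have "comp C k x = comp C (comp C k p) w"
    using w(1-4) pq(3,7) k(1,2) by simp
  also have "\<dots> = comp C (comp C k q) w"
    using k(3) by simp
  also have "\<dots> = comp C k y"
    using w(1,2,3,5) pq(4,6,7,8) k(1,2) by simp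
  finally show ?thesis .
qed

lemma kernel_pair_comp_coequalizes:
  assumes kp: "is_kernel_pair C (comp C g h) p q"
    and h: "regular_epi C h" and co: "is_coequalizer C u v g" and hg: "cod C h = dom C g"
    and k: "k \<in> Ar C" "dom C k = cod C h"
    and kpq: "comp C (comp C k h) p = comp C (comp C k h) q"
  shows "comp C k u = comp C k v"
proof -
  have hA: "h \<in> Ar C" by (rule regular_epi_Ar[OF h])
  note uv = coequalizerD[OF co]
  note pq = pullbackD[OF kp[unfolded is_kernel_pair_def]]
  have khA: "comp C k h \<in> Ar C" "dom C (comp C k h) = cod C p"
    using hA k pq(7) uv hg by simp_all
  obtain e x y where e: "epi C e" "cod C e = dom C u"
    and x: "x \<in> Ar C" "dom C x = dom C e" "cod C x = dom C h"
    and y: "y \<in> Ar C" "dom C y = dom C e" "cod C y = dom C h"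
    and hxy: "comp C h x = comp C u e" "comp C h y = comp C v e"
    using regular_epi_cover_pair[OF h uv(1) _ uv(2)] uv hg by auto
  have eA: "e \<in> Ar C" using e(1) unfolding epi_def by blast
  have "comp C (comp C g h) x = comp C (comp C g u) e"
    using x hA hxy(1) e(2) eA uv(1-6) hg by simp
  also have "\<dots> = comp C (comp C g v) e"
    using uv(7) by simp
  also have "\<dots> = comp C (comp C g h) y"
    using y hA hxy(2) e(2) eA uv(1-6) hg by simp
  finally have "comp C (comp C g h) x = comp C (comp C g h) y" .
  then have kh: "comp C (comp C k h) x = comp C (comp C k h) y"
    by (rule kernel_pair_coequalizer_eq[OF kp khA kpq x(1) y(1), rotated -1])
      (use x y hA uv(1-6) hg in simp_all)
  have "comp C (comp C k u) e = comp C (comp C k h) x"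
    using x hxy(1) hA k eA e(2) uv(1-6) hg by simp
  also have "\<dots> = comp C (comp C k h) y"
    by (fact kh)
  also have "\<dots> = comp C (comp C k v) e"
    using y hxy(2) hA k eA e(2) uv(1-6) hg by simp
  finally have "comp C (comp C k u) e = comp C (comp C k v) e" .
  then show ?thesis
    by (rule epiD[OF e(1), rotated -1]) (use k eA e(2) uv hg in simp_all)
qed

lemma kernel_pair_comp_factor:
  assumes kp: "is_kernel_pair C (comp C g h) p q"
    and h: "regular_epi C h" and g: "regular_epi C g" and hg: "cod C h = dom C g"
    and k: "k \<in> Ar C" "dom C k = cod C p" and kpq: "comp C k p = comp C k q"
  obtains l where "l \<in> Ar C" "dom C l = cod C g" "cod C l = cod C k" "comp C l (comp C g h) = k"
proof -
  have hA: "h \<in> Ar C" and gA: "g \<in> Ar C"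
    using h g by (simp_all add: regular_epi_Ar)
  note pq = pullbackD[OF kp[unfolded is_kernel_pair_def]]
  obtain u v where co: "is_coequalizer C u v h"
    using h unfolding regular_epi_def by blast
  note uv = coequalizerD[OF co]
  have "comp C (comp C g h) u = comp C (comp C g h) v"
    using uv hA gA hg by simp
  then have "comp C k u = comp C k v"
    by (rule kernel_pair_coequalizer_eq[OF kp k kpq uv(1,2), rotated -1])
      (use uv pq hA gA hg in simp_all)
  then obtain k' where k': "k' \<in> Ar C" "dom C k' = cod C h" "cod C k' = cod C k" "comp C k' h = k"
    using coequalizer_factor[OF co k(1)] k uv pq hA gA hg by auto
  obtain u2 v2 where co2: "is_coequalizer C u2 v2 g"
    using g unfolding regular_epi_def by blast
  have "comp C k' u2 = comp C k' v2"
    using kernel_pair_comp_coequalizes[OF kp h co2 hg k'(1,2)] kpq k'(4) by simp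
  then obtain l where l: "l \<in> Ar C" "dom C l = cod C g" "cod C l = cod C k" "comp C l g = k'"
    using coequalizer_factor[OF co2 k'(1)] k' coequalizerD[OF co2] hg by auto
  have "comp C l (comp C g h) = comp C (comp C l g) h"
    using l(1,2) hA gA hg by simp
  then show ?thesis
    using that l k'(4) by simp
qed

lemma regular_epi_comp:
  assumes h: "regular_epi C h" and g: "regular_epi C g" and hg: "cod C h = dom C g"
  shows "regular_epi C (comp C g h)"
proof -
  have f: "comp C g h \<in> Ar C" "dom C (comp C g h) = dom C h" "cod C (comp C g h) = cod C g"
    using h g hg by (simp_all add: regular_epi_Ar)
  obtain p q where kp: "is_kernel_pair C (comp C g h) p q"
    using pullback_exists[OF f(1) f(1)] unfolding is_kernel_pair_def by blast
  note pq = pullbackD[OF kp[unfolded is_kernel_pair_def]]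
  have epi: "epi C (comp C g h)"
    using epi_comp[OF regular_epi_imp_epi[OF h] regular_epi_imp_epi[OF g] hg] .
  have "is_coequalizer C p q (comp C g h)"
    unfolding is_coequalizer_def
  proof (intro conjI ballI impI)
    fix Z k
    assume "k \<in> hom C (cod C p) Z" and kpq: "comp C k p = comp C k q"
    then have k: "k \<in> Ar C" "dom C k = cod C p" "cod C k = Z"
      by (simp_all add: mem_hom_iff)
    obtain l where "l \<in> Ar C" "dom C l = cod C g" "cod C l = Z" "comp C l (comp C g h) = k"
      using kernel_pair_comp_factor[OF kp h g hg k(1,2) kpq] k(3) by metis
    then show "\<exists>!l. l \<in> hom C (cod C (comp C g h)) Z \<and> comp C l (comp C g h) = k"
      using f epi epiD unfolding mem_hom_iff by metis
  qed (use pq f in simp_all)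
  then show ?thesis
    unfolding regular_epi_def by blast
qed

lemma finite_regular_epis_common_refinement:
  assumes "finite I" and A: "A \<in> Ob C"
    and "\<forall>i \<in> I. f i \<in> hom C (X i) A \<and> regular_epi C (f i)"
  shows "\<exists>Q r s. r \<in> hom C Q A \<and> regular_epi C r \<and>
           (\<forall>i \<in> I. s i \<in> hom C Q (X i) \<and> regular_epi C (s i) \<and> comp C (f i) (s i) = r)"
  using assms(1,3)
proof (induction I rule: finite_induct)
  case empty
  then show ?case
    using ident_in_hom[OF A] regular_epi_ident[OF A] by blast
next
  case (insert j I)
  then obtain Q r s where r: "r \<in> hom C Q A" "regular_epi C r"
    and s: "\<forall>i \<in> I. s i \<in> hom C Q (X i) \<and> regular_epi C (s i) \<and> comp C (f i) (s i) = r"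
    by auto
  have fj: "f j \<in> hom C (X j) A" "regular_epi C (f j)"
    using insert.prems by simp_all
  obtain t d where pb: "is_pullback C (f j) r t d"
    using pullback_exists fj(1) r(1) unfolding mem_hom_iff by metis
  note td = pullbackD[OF pb]
  have d: "regular_epi C d" and t: "regular_epi C t"
    using regular_epi_pullback[OF pb fj(2)] regular_epi_pullback[OF pullback_sym[OF pb] r(2)] .
  define s' where "s' = (\<lambda>i. if i = j then t else comp C (s i) d)"
  have "comp C r d \<in> hom C (dom C d) A" "regular_epi C (comp C r d)"
    using r td regular_epi_comp[OF d r(2)] by (simp_all add: mem_hom_iff)
  moreover have "s' i \<in> hom C (dom C d) (X i) \<and> regular_epi C (s' i) \<and> comp C (f i) (s' i) = comp C r d"
    if i: "i \<in> insert j I" for i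
  proof (cases "i = j")
    case True
    then show ?thesis
      using t td fj(1) by (simp add: s'_def mem_hom_iff)
  next
    case False
    then have "s i \<in> hom C Q (X i)" "regular_epi C (s i)" "comp C (f i) (s i) = r"
      and "f i \<in> hom C (X i) A"
      using i s insert.prems by auto
    then show ?thesis
      using False td r(1) regular_epi_comp[OF d]
      by (simp add: s'_def mem_hom_iff flip: \<open>comp C (f i) (s i) = r\<close>)
  qed
  ultimately show ?case
    by blast
qed

end

theorem lemma5p4:
  fixes C :: "('o, 'a) category"
    and n :: nat and A B :: 'o
    and Q' Cs :: "nat \<Rightarrow> 'o"
    and \<alpha>' \<beta>' a b :: "nat \<Rightarrow> 'a"
  assumes "regular_category C"
    and "n \<ge> 1"
    and "A \<in> Ob C" and "B \<in> Ob C"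
    and "\<forall>i \<in> {1..n}. Q' i \<in> Ob C \<and> Cs i \<in> Ob C"
    and "\<forall>i \<in> {1..n}. \<alpha>' i \<in> hom C (Q' i) A \<and> regular_epi C (\<alpha>' i)"
    and "\<forall>i \<in> {1..n}. \<beta>' i \<in> hom C (Q' i) B \<and> regular_epi C (\<beta>' i)"
    and "\<forall>i \<in> {1..n}. a i \<in> hom C A (Cs i) \<and> b i \<in> hom C B (Cs i)"
    and "\<forall>i \<in> {1..n}. comp C (b i) (\<beta>' i) = comp C (a i) (\<alpha>' i)"
  shows "\<exists>Q \<alpha> \<beta>. Q \<in> Ob C \<and> \<alpha> \<in> hom C Q A \<and> regular_epi C \<alpha> \<and>
           (\<forall>i \<in> {1..n}. \<beta> i \<in> hom C Q B \<and> regular_epi C (\<beta> i) \<and>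
              comp C (b i) (\<beta> i) = comp C (a i) \<alpha>)"
proof -
  interpret regular_cat C by unfold_locales (fact assms(1))
  obtain Q r s where r: "r \<in> hom C Q A" "regular_epi C r"
    and s: "\<forall>i \<in> {1..n}. s i \<in> hom C Q (Q' i) \<and> regular_epi C (s i) \<and> comp C (\<alpha>' i) (s i) = r"
    using finite_regular_epis_common_refinement[OF _ assms(3,6)] by blast
  have "comp C (\<beta>' i) (s i) \<in> hom C Q B \<and> regular_epi C (comp C (\<beta>' i) (s i)) \<and>
        comp C (b i) (comp C (\<beta>' i) (s i)) = comp C (a i) r"
    if i: "i \<in> {1..n}" for i
  proof -
    have si: "s i \<in> hom C Q (Q' i)" "regular_epi C (s i)" and r_eq: "r = comp C (\<alpha>' i) (s i)"
      using s i by auto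
    have legs: "\<alpha>' i \<in> hom C (Q' i) A" "\<beta>' i \<in> hom C (Q' i) B" "regular_epi C (\<beta>' i)"
      and ab: "a i \<in> hom C A (Cs i)" "b i \<in> hom C B (Cs i)"
      using assms(6-8) i by auto
    have "comp C (b i) (comp C (\<beta>' i) (s i)) = comp C (comp C (b i) (\<beta>' i)) (s i)"
      using si legs ab by (simp add: mem_hom_iff)
    also have "\<dots> = comp C (comp C (a i) (\<alpha>' i)) (s i)"
      using assms(9) i by simp
    also have "\<dots> = comp C (a i) r"
      using si legs ab r_eq by (simp add: mem_hom_iff)
    finally show ?thesis
      using si legs regular_epi_comp[OF si(2) legs(3)] by (simp add: mem_hom_iff)
  qed
  moreover have "Q \<in> Ob C"
    using r(1) dom_in_Ob unfolding mem_hom_iff by blast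
  ultimately show ?thesis
    using r by (intro exI[of _ Q] exI[of _ r] exI[of _ "\<lambda>i. comp C (\<beta>' i) (s i)"]) simp
qed

end
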